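(* Let $G$ be a compactly generated, totally disconnected, locally compact group, let $\Gamma$ be a Cayley–Abels graph for $G$ of degree $d$, let $K$ be the kernel of the action of $G$ on $\Gamma$, and let $L\le S_d$ be the local action of $G$ on $\Gamma$. If $A$ belongs to the local simple content of $G/K$, then $A$ is a subquotient of a point stabilizer of $L$: there exist $i\in\{1,\dots,d\}$ and subgroups $N\trianglelefteq H\le L_i$ with $H/N\cong A$, where $L_i$ is the stabilizer of $i$ in $L$. In particular $A$ is isomorphic to a subquotient of $S_{d-1}$.
   Context: A Cayley–Abels graph for a totally disconnected, locally compact group $G$ is a connected, locally finite simple graph $\Gamma$ with an action of $G$ by automorphisms (not necessarily faithful) that is vertex-transitive with compact open vertex stabilizers. The local action is the permutation group, viewed as a subgroup of $S_d$ up to conjugacy, induced by a vertex stabilizer $G_\alpha$ on the neighbourhood $\Gamma(\alpha)$. A subquotient of a group is a quotient of one of its subgroups. For a second countable profinite group, a composition series is a countable descending chain of closed subgroups, each normal in the previous, with trivial intersection and simple (finite) successive quotients; its composition factors are independent of the series. The local simple content of a second countable, totally disconnected, locally compact group is the set of isomorphism classes of finite simple groups that are composition factors of every compact open subgroup. *)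

theory Defs
  imports "HOL-Analysis.Analysis" "HOL-Algebra.Algebra"
begin

definition topological_group :: "('a, 'b) monoid_scheme \<Rightarrow> 'a topology \<Rightarrow> bool" where
  "topological_group G T \<longleftrightarrow> group G \<and> topspace T = carrier G \<and>
     continuous_map (prod_topology T T) T (\<lambda>(x, y). mult G x y) \<and>
     continuous_map T T (\<lambda>x. m_inv G x)"

definition totally_disconnected_space :: "'a topology \<Rightarrow> bool" where
  "totally_disconnected_space T \<longleftrightarrow>
     (\<forall>x \<in> topspace T. connected_component_of_set T x = {x})"

definition tdlc_group :: "('a, 'b) monoid_scheme \<Rightarrow> 'a topology \<Rightarrow> bool" where
  "tdlc_group G T \<longleftrightarrow> topological_group G T \<and> Hausdorff_space T \<and>
     locally_compact_space T \<and> totally_disconnected_space T"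

definition compactly_generated :: "('a, 'b) monoid_scheme \<Rightarrow> 'a topology \<Rightarrow> bool" where
  "compactly_generated G T \<longleftrightarrow> (\<exists>C. compactin T C \<and> generate G C = carrier G)"

definition quot_topology :: "('a, 'b) monoid_scheme \<Rightarrow> 'a topology \<Rightarrow> 'a set \<Rightarrow> 'a set topology" where
  "quot_topology G T K = topology (\<lambda>S. S \<subseteq> RCOSETS G K \<and> openin T (\<Union>S))"

text \<open>A composition series of the closed subgroup U of the topological group (G,T):
  a descending chain of closed subgroups indexed by nat, starting at U, each normal in the
  previous one, with trivial intersection, and each successive quotient either trivial
  (repetition, which allows finite chains) or finite simple.\<close>
definition composition_series ::
  "('a, 'b) monoid_scheme \<Rightarrow> 'a topology \<Rightarrow> 'a set \<Rightarrow> (nat \<Rightarrow> 'a set) \<Rightarrow> bool" where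
  "composition_series G T U S \<longleftrightarrow> S 0 = U \<and>
     (\<forall>n. closedin T (S n) \<and> S (Suc n) \<lhd> G\<lparr>carrier := S n\<rparr> \<and>
          (S (Suc n) = S n \<or>
           (finite (carrier (G\<lparr>carrier := S n\<rparr> Mod S (Suc n))) \<and>
            simple_group (G\<lparr>carrier := S n\<rparr> Mod S (Suc n))))) \<and>
     (\<Inter>n. S n) = {one G}"

definition composition_factor ::
  "('a, 'b) monoid_scheme \<Rightarrow> 'a topology \<Rightarrow> 'a set \<Rightarrow> ('c, 'd) monoid_scheme \<Rightarrow> bool" where
  "composition_factor G T U A \<longleftrightarrow>
     (\<exists>S n. composition_series G T U S \<and> S (Suc n) \<noteq> S n \<and>
            (G\<lparr>carrier := S n\<rparr> Mod S (Suc n)) \<cong> A)"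

definition in_local_simple_content ::
  "('a, 'b) monoid_scheme \<Rightarrow> 'a topology \<Rightarrow> ('c, 'd) monoid_scheme \<Rightarrow> bool" where
  "in_local_simple_content G T A \<longleftrightarrow> group A \<and> finite (carrier A) \<and> simple_group A \<and>
     (\<forall>U. subgroup U G \<and> compactin T U \<and> openin T U \<longrightarrow> composition_factor G T U A)"

definition nbhd :: "('v \<Rightarrow> 'v \<Rightarrow> bool) \<Rightarrow> 'v \<Rightarrow> 'v set" where
  "nbhd E v = {w. E v w}"

definition cayley_abels_graph ::
  "('a, 'b) monoid_scheme \<Rightarrow> 'a topology \<Rightarrow> 'v set \<Rightarrow> ('v \<Rightarrow> 'v \<Rightarrow> bool) \<Rightarrow> ('a \<Rightarrow> 'v \<Rightarrow> 'v) \<Rightarrow> bool"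
  where
  "cayley_abels_graph G T V E act \<longleftrightarrow>
     V \<noteq> {} \<and>
     (\<forall>u w. E u w \<longrightarrow> u \<in> V \<and> w \<in> V) \<and>
     (\<forall>u w. E u w \<longrightarrow> E w u) \<and> (\<forall>u. \<not> E u u) \<and>
     (\<forall>u \<in> V. \<forall>w \<in> V. (u, w) \<in> {(x, y). E x y}\<^sup>*) \<and>
     (\<forall>v \<in> V. finite (nbhd E v)) \<and>
     group_action G V act \<and>
     (\<forall>g \<in> carrier G. \<forall>u \<in> V. \<forall>w \<in> V. E (act g u) (act g w) \<longleftrightarrow> E u w) \<and>
     (\<forall>u \<in> V. \<forall>w \<in> V. \<exists>g \<in> carrier G. act g u = w) \<and>
     (\<forall>v \<in> V. compactin T (stabilizer G act v) \<and> openin T (stabilizer G act v))"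

definition action_kernel :: "('a, 'b) monoid_scheme \<Rightarrow> 'v set \<Rightarrow> ('a \<Rightarrow> 'v \<Rightarrow> 'v) \<Rightarrow> 'a set" where
  "action_kernel G V act = {g \<in> carrier G. \<forall>v \<in> V. act g v = v}"

text \<open>The local action at the vertex alpha, transported to a subgroup of S_d = sym_group d
  via a bijection beta from the neighbourhood of alpha onto {1..d}.  (Different choices of
  alpha and beta give conjugate subgroups.)\<close>
definition local_action ::
  "('a, 'b) monoid_scheme \<Rightarrow> ('v \<Rightarrow> 'v \<Rightarrow> bool) \<Rightarrow> ('a \<Rightarrow> 'v \<Rightarrow> 'v) \<Rightarrow> 'v \<Rightarrow> ('v \<Rightarrow> nat) \<Rightarrow> nat
     \<Rightarrow> (nat \<Rightarrow> nat) set" where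
  "local_action G E act \<alpha> \<beta> d =
     {(\<lambda>i. if i \<in> {1..d} then \<beta> (act g (inv_into (nbhd E \<alpha>) \<beta> i)) else i) | g.
        g \<in> stabilizer G act \<alpha>}"

definition point_stabilizer :: "(nat \<Rightarrow> nat) set \<Rightarrow> nat \<Rightarrow> (nat \<Rightarrow> nat) set" where
  "point_stabilizer L i = {\<sigma> \<in> L. \<sigma> i = i}"

end

theory Submission
  imports Defs
begin

text \<open>
  Let K be the kernel of the action and u a neighbour of \<alpha>. The image of the edge stabilizer
  G_\<alpha> \<inter> G_u in G/K is compact open, so A is one of its composition factors; pulling back
  gives closed subgroups Q \<lhd> P \<le> G_\<alpha> \<inter> G_u and an epimorphism \<phi> : P \<rightarrow> A with kernel Q.
  As A is finite, P - Q is compact, and since it is covered by the open sets of elements moving a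
  given vertex, the elements of P fixing some finite vertex set F already lie in Q.

  Now grow {\<alpha>, u} by adjoining neighbourhoods of its vertices until it contains F. The image
  under \<phi> of the pointwise fixer starts as A and ends trivial, so at some step Y \<mapsto> Y \<union> \<Gamma>(w)
  with w \<in> Y it drops from A to a proper subgroup. The fixer of Y \<union> \<Gamma>(w) is normal in the fixer M of Y,
  so by simplicity its image is trivial: \<phi> restricted to M factors through the action of M on
  \<Gamma>(w). Conjugating w to \<alpha>, this action becomes a subgroup of the local action L that fixes the
  point coming from a neighbour of w inside Y, so A is a subquotient of a point stabilizer
  L_i. Conjugating by the transposition of i and d moves L_i into S_(d-1).
\<close>

section \<open>Topological groups acting on sets\<close>

lemma continuous_map_left_mult:
  assumes "topological_group G T" "c \<in> carrier G"
  shows "continuous_map T T (\<lambda>g. c \<otimes>\<^bsub>G\<^esub> g)"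
proof -
  have top: "topspace T = carrier G"
    and mult: "continuous_map (prod_topology T T) T (\<lambda>(x, y). x \<otimes>\<^bsub>G\<^esub> y)"
    using assms(1) unfolding topological_group_def by auto
  have "continuous_map T (prod_topology T T) (\<lambda>g. (c, g))"
    using assms(2) top by (auto intro: continuous_map_pairedI)
  from continuous_map_compose[OF this mult] show ?thesis
    by (simp add: o_def)
qed

lemma openin_left_mult_preimage:
  assumes "topological_group G T" "c \<in> carrier G" "openin T C"
  shows "openin T {g \<in> carrier G. c \<otimes>\<^bsub>G\<^esub> g \<in> C}"
  using openin_continuous_map_preimage[OF continuous_map_left_mult[OF assms(1,2)] assms(3)] assms(1)
  by (simp add: topological_group_def)

lemma closedin_left_mult_preimage:
  assumes "topological_group G T" "c \<in> carrier G" "closedin T C"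
  shows "closedin T {g \<in> carrier G. c \<otimes>\<^bsub>G\<^esub> g \<in> C}"
  using closedin_continuous_map_preimage[OF continuous_map_left_mult[OF assms(1,2)] assms(3)] assms(1)
  by (simp add: topological_group_def)

lemma (in group_action) act_one: "x \<in> E \<Longrightarrow> \<phi> \<one> x = x"
  by (metis id_eq_one restrict_apply')

lemma (in group_action) act_inv_act:
  assumes "g \<in> carrier G" "x \<in> E"
  shows "\<phi> (inv g) (\<phi> g x) = x"
proof -
  interpret group G
    using group_hom group_hom.axioms(1) by blast
  show ?thesis
    using composition_rule[of x "inv g" g] assms act_one by simp
qed

lemma (in group_action) act_act_inv:
  assumes "g \<in> carrier G" "x \<in> E"
  shows "\<phi> g (\<phi> (inv g) x) = x"
proof -
  interpret group G
    using group_hom group_hom.axioms(1) by blast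
  show ?thesis
    using composition_rule[of x g "inv g"] assms act_one by simp
qed

lemma (in group_action) act_eq_iff_inv_mult_stabilizer:
  assumes "g0 \<in> carrier G" "g \<in> carrier G" "x \<in> E"
  shows "\<phi> g x = \<phi> g0 x \<longleftrightarrow> inv g0 \<otimes> g \<in> stabilizer G \<phi> x"
proof -
  interpret group G
    using group_hom group_hom.axioms(1) by blast
  have "\<phi> (inv g0 \<otimes> g) x = \<phi> (inv g0) (\<phi> g x)"
    using composition_rule assms by simp
  moreover have "\<phi> g x \<in> E"
    using element_image assms by blast
  ultimately show ?thesis
    unfolding stabilizer_def
    using assms act_inv_act[of g0 x] act_act_inv[of g0 "\<phi> g x"] by auto
qed

lemma openin_action_fibre:
  assumes "topological_group G T" "group_action G V act" "v \<in> V"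
    and "openin T (stabilizer G act v)"
  shows "openin T {g \<in> carrier G. act g v = w}"
proof (cases "\<exists>g0 \<in> carrier G. act g0 v = w")
  case False
  then show ?thesis
    by (metis (mono_tags, lifting) empty_Collect_eq openin_empty)
next
  case True
  then obtain g0 where g0: "g0 \<in> carrier G" "act g0 v = w" by auto
  then have "{g \<in> carrier G. act g v = w} = {g \<in> carrier G. inv\<^bsub>G\<^esub> g0 \<otimes>\<^bsub>G\<^esub> g \<in> stabilizer G act v}"
    using group_action.act_eq_iff_inv_mult_stabilizer[OF assms(2) g0(1) _ assms(3)] by auto
  also have "openin T \<dots>"
    using assms(1,4) g0(1) by (intro openin_left_mult_preimage) (auto simp: topological_group_def)
  finally show ?thesis .
qed

lemma closedin_stabilizer:
  assumes "topological_group G T" "group_action G V act" "v \<in> V"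
    and "\<forall>u\<in>V. openin T (stabilizer G act u)"
  shows "closedin T (stabilizer G act v)"
proof -
  have top: "topspace T = carrier G"
    using assms(1) unfolding topological_group_def by auto
  have "topspace T - stabilizer G act v = (\<Union>w\<in>V - {v}. {g \<in> carrier G. act g v = w})"
    unfolding top stabilizer_def using group_action.element_image[OF assms(2) _ assms(3)] by auto
  moreover have "openin T (\<Union>w\<in>V - {v}. {g \<in> carrier G. act g v = w})"
    using openin_action_fibre[OF assms(1-3)] assms(3,4) by auto
  ultimately show ?thesis
    unfolding closedin_def top stabilizer_def by auto
qed

lemma compact_open_stabilizer_pair:
  assumes tg: "topological_group G T" and ga: "group_action G V act"
    and stab: "\<forall>v\<in>V. compactin T (stabilizer G act v) \<and> openin T (stabilizer G act v)"
    and "v \<in> V" "u \<in> V"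
  shows "compactin T (stabilizer G act v \<inter> stabilizer G act u)"
    and "openin T (stabilizer G act v \<inter> stabilizer G act u)"
proof -
  have "closedin T (stabilizer G act v \<inter> stabilizer G act u)"
    using closedin_stabilizer[OF tg ga] stab assms(4,5) by (intro closedin_Int) auto
  then show "compactin T (stabilizer G act v \<inter> stabilizer G act u)"
    using closed_compactin[of T "stabilizer G act v"] stab assms(4) by blast
  show "openin T (stabilizer G act v \<inter> stabilizer G act u)"
    using stab assms(4,5) by (intro openin_Int) auto
qed

lemma action_kernel_normal:
  assumes "group_action G V act"
  shows "action_kernel G V act \<lhd> G"
proof -
  interpret group_action G V act by fact
  have act_ext: "act g \<in> extensional V" if "g \<in> carrier G" for g
    using bij_prop0[OF that] unfolding Bij_def by auto
  have "\<one>\<^bsub>BijGroup V\<^esub> = (\<lambda>x\<in>V. x)"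
    using id_eq_one group_hom.hom_one[OF group_hom] by simp
  then have "kernel G (BijGroup V) act = action_kernel G V act"
    unfolding kernel_def action_kernel_def
    using act_ext by (auto intro!: extensionalityI[where A = V])
  then show ?thesis
    using group_hom.normal_kernel[OF group_hom] by simp
qed

section \<open>The quotient topology on cosets\<close>

lemma (in group) Union_rcosets_subset:
  assumes "subgroup K G" "S \<subseteq> rcosets K"
  shows "\<Union>S = {g \<in> carrier G. K #> g \<in> S}"
proof
  show "\<Union>S \<subseteq> {g \<in> carrier G. K #> g \<in> S}"
  proof
    fix x assume "x \<in> \<Union>S"
    then obtain y where y: "y \<in> carrier G" "K #> y \<in> S" "x \<in> K #> y"
      using assms(2) unfolding RCOSETS_def by blast
    then have "x \<in> carrier G" "K #> y = K #> x"
      using assms(1) repr_independence subgroup.elemrcos_carrier[OF assms(1) is_group] by auto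
    then show "x \<in> {g \<in> carrier G. K #> g \<in> S}"
      using y by auto
  qed
  show "{g \<in> carrier G. K #> g \<in> S} \<subseteq> \<Union>S"
    using rcos_self[OF _ assms(1)] by auto
qed

lemma openin_quot_topology:
  assumes "group G" "subgroup K G"
  shows "openin (quot_topology G T K) S \<longleftrightarrow> S \<subseteq> rcosets\<^bsub>G\<^esub> K \<and> openin T (\<Union>S)"
proof -
  have "istopology (\<lambda>S. S \<subseteq> rcosets\<^bsub>G\<^esub> K \<and> openin T (\<Union>S))"
    unfolding istopology_def
  proof (rule conjI; intro allI impI)
    fix S S' assume "S \<subseteq> rcosets\<^bsub>G\<^esub> K \<and> openin T (\<Union>S)" "S' \<subseteq> rcosets\<^bsub>G\<^esub> K \<and> openin T (\<Union>S')"
    moreover have "\<Union>(S \<inter> S') = \<Union>S \<inter> \<Union>S'" if "S \<subseteq> rcosets\<^bsub>G\<^esub> K" "S' \<subseteq> rcosets\<^bsub>G\<^esub> K"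
      using group.Union_rcosets_subset[OF assms, of S] group.Union_rcosets_subset[OF assms, of S']
        group.Union_rcosets_subset[OF assms, of "S \<inter> S'"] that by auto
    ultimately show "S \<inter> S' \<subseteq> rcosets\<^bsub>G\<^esub> K \<and> openin T (\<Union>(S \<inter> S'))"
      by auto
  next
    fix \<K> assume "\<forall>S\<in>\<K>. S \<subseteq> rcosets\<^bsub>G\<^esub> K \<and> openin T (\<Union>S)"
    moreover have "\<Union>(\<Union>\<K>) = (\<Union>S\<in>\<K>. \<Union>S)"
      by auto
    ultimately show "\<Union>\<K> \<subseteq> rcosets\<^bsub>G\<^esub> K \<and> openin T (\<Union>(\<Union>\<K>))"
      by auto
  qed
  then show ?thesis
    unfolding quot_topology_def by simp
qed

lemma topspace_quot_topology:
  assumes "group G" "subgroup K G" "topspace T = carrier G"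
  shows "topspace (quot_topology G T K) = rcosets\<^bsub>G\<^esub> K"
proof -
  have "\<Union>(rcosets\<^bsub>G\<^esub> K) = carrier G"
    using group.Union_rcosets_subset[OF assms(1,2) order_refl] group.rcos_self[OF assms(1) _ assms(2)]
    unfolding RCOSETS_def by auto
  then have "openin (quot_topology G T K) (rcosets\<^bsub>G\<^esub> K)"
    using openin_quot_topology[OF assms(1,2)] assms(3) openin_topspace[of T] by auto
  then show ?thesis
    using openin_subset openin_quot_topology[OF assms(1,2)] openin_topspace by blast
qed

lemma closedin_quot_topology_Union:
  assumes "group G" "subgroup K G" "topspace T = carrier G"
    and "closedin (quot_topology G T K) C"
  shows "closedin T (\<Union>C)"
proof -
  have C: "C \<subseteq> rcosets\<^bsub>G\<^esub> K" and "openin (quot_topology G T K) (rcosets\<^bsub>G\<^esub> K - C)"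
    using assms(4) unfolding closedin_def topspace_quot_topology[OF assms(1-3)] by auto
  then have "openin T (\<Union>(rcosets\<^bsub>G\<^esub> K - C))"
    using openin_quot_topology[OF assms(1,2)] by auto
  moreover have "\<Union>(rcosets\<^bsub>G\<^esub> K - C) = carrier G - \<Union>C" "\<Union>C \<subseteq> carrier G"
    using group.Union_rcosets_subset[OF assms(1,2)] C unfolding RCOSETS_def by auto
  ultimately show ?thesis
    unfolding closedin_def assms(3) by auto
qed

lemma continuous_map_rcoset_quot_topology:
  assumes "group G" "subgroup K G" "topspace T = carrier G"
  shows "continuous_map T (quot_topology G T K) (\<lambda>g. K #>\<^bsub>G\<^esub> g)"
  unfolding continuous_map_def
proof (intro conjI allI impI)
  show "(\<lambda>g. K #>\<^bsub>G\<^esub> g) \<in> topspace T \<rightarrow> topspace (quot_topology G T K)"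
    unfolding topspace_quot_topology[OF assms] assms(3) RCOSETS_def by auto
  fix U assume "openin (quot_topology G T K) U"
  then show "openin T {x \<in> topspace T. K #>\<^bsub>G\<^esub> x \<in> U}"
    using openin_quot_topology[OF assms(1,2)] group.Union_rcosets_subset[OF assms(1,2)] assms(3)
    by auto
qed

lemma compact_open_subgroup_quotient:
  fixes G (structure)
  assumes tg: "topological_group G T" and K: "K \<lhd> G"
    and H0: "subgroup H0 G" "K \<subseteq> H0" "compactin T H0" "openin T H0"
  defines "U \<equiv> (\<lambda>g. K #> g) ` H0"
  shows "subgroup U (G Mod K)" "compactin (quot_topology G T K) U" "openin (quot_topology G T K) U"
    and "\<Union>U = H0"
proof -
  interpret K: normal K G by fact
  have top: "topspace T = carrier G"
    using tg unfolding topological_group_def by simp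
  have "group_hom G (G Mod K) (\<lambda>g. K #> g)"
    using K.r_coset_hom_Mod K.factorgroup_is_group unfolding group_hom_def group_hom_axioms_def
    by (simp add: K.is_group)
  then show "subgroup U (G Mod K)"
    unfolding U_def by (rule group_hom.subgroup_img_is_subgroup[OF _ H0(1)])
  show "\<Union>U = H0"
  proof
    show "\<Union>U \<subseteq> H0"
    proof
      fix g assume "g \<in> \<Union>U"
      then obtain h k where "h \<in> H0" "k \<in> K" "g = k \<otimes> h"
        unfolding U_def r_coset_def by blast
      then show "g \<in> H0"
        using H0(2) subgroup.m_closed[OF H0(1)] by blast
    qed
    show "H0 \<subseteq> \<Union>U"
      unfolding U_def using K.rcos_self[OF _ K.subgroup_axioms] subgroup.subset[OF H0(1)] by blast
  qed
  moreover have "U \<subseteq> rcosets K"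
    unfolding U_def RCOSETS_def using H0(1) subgroup.subset by blast
  ultimately show "compactin (quot_topology G T K) U" "openin (quot_topology G T K) U"
    using image_compactin[OF H0(3) continuous_map_rcoset_quot_topology[OF K.is_group K.subgroup_axioms top]]
      openin_quot_topology[OF K.is_group K.subgroup_axioms] H0(4)
    unfolding U_def by auto
qed

section \<open>Subquotients\<close>

lemma (in group) inv_mult_eq_one_iff:
  assumes "a \<in> carrier G" "b \<in> carrier G"
  shows "inv a \<otimes> b = \<one> \<longleftrightarrow> b = a"
proof
  assume "inv a \<otimes> b = \<one>"
  then have "a \<otimes> (inv a \<otimes> b) = a"
    using assms(1) by simp
  then show "b = a"
    using assms by (simp add: m_assoc[symmetric])
qed (use assms in simp)

lemma hom_factors_through_image:
  assumes f: "group_hom G1 S f" and g: "group_hom G1 A g"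
    and kernel: "\<And>x. x \<in> carrier G1 \<Longrightarrow> f x = \<one>\<^bsub>S\<^esub> \<Longrightarrow> g x = \<one>\<^bsub>A\<^esub>"
  obtains \<psi> where "group_hom (S\<lparr>carrier := f ` carrier G1\<rparr>) A \<psi>" "\<And>x. x \<in> carrier G1 \<Longrightarrow> \<psi> (f x) = g x"
proof -
  interpret f: group_hom G1 S f by fact
  interpret g: group_hom G1 A g by fact
  have well_defined: "g x = g y" if xy: "x \<in> carrier G1" "y \<in> carrier G1" "f x = f y" for x y
  proof -
    have "f (inv\<^bsub>G1\<^esub> x \<otimes>\<^bsub>G1\<^esub> y) = \<one>\<^bsub>S\<^esub>"
      using xy f.H.inv_mult_eq_one_iff by simp
    then have "inv\<^bsub>A\<^esub> g x \<otimes>\<^bsub>A\<^esub> g y = \<one>\<^bsub>A\<^esub>"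
      using kernel[of "inv\<^bsub>G1\<^esub> x \<otimes>\<^bsub>G1\<^esub> y"] xy by simp
    then show ?thesis
      using xy g.H.inv_mult_eq_one_iff by simp
  qed
  define \<psi> where "\<psi> h = g (SOME x. x \<in> carrier G1 \<and> f x = h)" for h
  have \<psi>: "\<psi> (f x) = g x" if x: "x \<in> carrier G1" for x
  proof -
    define y where "y = (SOME y. y \<in> carrier G1 \<and> f y = f x)"
    have "\<exists>y. y \<in> carrier G1 \<and> f y = f x"
      using x by blast
    then have "y \<in> carrier G1 \<and> f y = f x"
      unfolding y_def by (rule someI_ex)
    then show ?thesis
      unfolding \<psi>_def y_def[symmetric] using well_defined x by blast
  qed
  let ?H = "S\<lparr>carrier := f ` carrier G1\<rparr>"
  have "\<psi> \<in> hom ?H A"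
  proof (rule homI)
    fix a assume "a \<in> carrier ?H"
    then obtain x where "x \<in> carrier G1" "a = f x"
      by auto
    then show "\<psi> a \<in> carrier A"
      using \<psi> by simp
  next
    fix a b assume "a \<in> carrier ?H" "b \<in> carrier ?H"
    then obtain x y where "x \<in> carrier G1" "a = f x" "y \<in> carrier G1" "b = f y"
      by auto
    then show "\<psi> (a \<otimes>\<^bsub>?H\<^esub> b) = \<psi> a \<otimes>\<^bsub>A\<^esub> \<psi> b"
      using \<psi>[of "x \<otimes>\<^bsub>G1\<^esub> y"] \<psi>[of x] \<psi>[of y] by simp
  qed
  then have "group_hom ?H A \<psi>"
    using f.H.subgroup_imp_group[OF f.img_is_subgroup] g.H.group_axioms
    unfolding group_hom_def group_hom_axioms_def by blast
  then show thesis
    using that \<psi> by blast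
qed

lemma quotient_of_image_if_kernel_le:
  assumes f: "group_hom G1 S f" and g: "group_hom G1 A g" "g ` carrier G1 = carrier A"
    and kernel: "\<And>x. x \<in> carrier G1 \<Longrightarrow> f x = \<one>\<^bsub>S\<^esub> \<Longrightarrow> g x = \<one>\<^bsub>A\<^esub>"
  shows "subgroup (f ` carrier G1) S \<and>
    (\<exists>N. N \<lhd> S\<lparr>carrier := f ` carrier G1\<rparr> \<and> S\<lparr>carrier := f ` carrier G1\<rparr> Mod N \<cong> A)"
proof -
  obtain \<psi> where \<psi>: "group_hom (S\<lparr>carrier := f ` carrier G1\<rparr>) A \<psi>" "\<And>x. x \<in> carrier G1 \<Longrightarrow> \<psi> (f x) = g x"
    using hom_factors_through_image[OF f g(1) kernel] by blast
  have "\<psi> ` carrier (S\<lparr>carrier := f ` carrier G1\<rparr>) = g ` carrier G1"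
    using \<psi>(2) by (force simp: image_image)
  then show ?thesis
    using group_hom.normal_kernel[OF \<psi>(1)] group_hom.FactGroup_iso[OF \<psi>(1)] g(2)
      group_hom.img_is_subgroup[OF f] by auto
qed

lemma group_hom_restrict_subgroup:
  assumes "group G" "group_hom (G\<lparr>carrier := P\<rparr>) A \<phi>" "subgroup M G" "M \<subseteq> P"
  shows "group_hom (G\<lparr>carrier := M\<rparr>) A \<phi>"
proof -
  interpret \<phi>: group_hom "G\<lparr>carrier := P\<rparr>" A \<phi> by fact
  have "\<phi> \<in> hom (G\<lparr>carrier := M\<rparr>) A"
    using assms(4) \<phi>.hom_closed \<phi>.hom_mult by (intro homI) (auto simp: subsetD)
  then show ?thesis
    using group.subgroup_imp_group[OF assms(1,3)] \<phi>.H.group_axioms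
    unfolding group_hom_def group_hom_axioms_def by blast
qed

lemma image_of_normalized_subgroup_trivial:
  assumes G: "group G" and \<phi>: "group_hom (G\<lparr>carrier := P\<rparr>) A \<phi>" and A: "simple_group A"
    and M: "subgroup M G" "M \<subseteq> P" "\<phi> ` M = carrier A"
    and N: "subgroup N G" "N \<subseteq> M" "\<And>x y. x \<in> M \<Longrightarrow> y \<in> N \<Longrightarrow> x \<otimes>\<^bsub>G\<^esub> y \<otimes>\<^bsub>G\<^esub> inv\<^bsub>G\<^esub> x \<in> N"
    and proper: "\<phi> ` N \<noteq> carrier A"
  shows "\<phi> ` N = {\<one>\<^bsub>A\<^esub>}"
proof -
  interpret G: group G by fact
  interpret \<phi>: group_hom "G\<lparr>carrier := P\<rparr>" A \<phi> by fact
  have GM: "group (G\<lparr>carrier := M\<rparr>)"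
    using G.subgroup_imp_group[OF M(1)] .
  have "N \<lhd> G\<lparr>carrier := M\<rparr>"
    unfolding group.normal_inv_iff[OF GM]
    using G.subgroup_incl[OF N(1) M(1) N(2)] N(3) G.m_inv_consistent[OF M(1)] by simp
  moreover have "group_hom (G\<lparr>carrier := M\<rparr>) A \<phi>"
    using group_hom_restrict_subgroup[OF G \<phi> M(1,2)] .
  ultimately have "\<phi> ` N \<lhd> A"
    using normal.surj_hom_normal_subgroup M(3) by fastforce
  then show ?thesis
    using simple_group.no_real_normal_subgroup[OF A] proper by blast
qed

lemma conj_transpose_permutes:
  fixes d :: nat
  assumes "i \<in> {1..d}" "p permutes {1..d}" "p i = i"
  shows "Transposition.transpose i d \<circ> p \<circ> Transposition.transpose i d permutes {1..d - 1}"
proof -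
  have "Transposition.transpose i d permutes {1..d}"
    using assms(1) by (intro permutes_swap_id) auto
  then have "Transposition.transpose i d \<circ> p \<circ> Transposition.transpose i d permutes {1..d}"
    using assms(2) by (intro permutes_compose)
  moreover have "(Transposition.transpose i d \<circ> p \<circ> Transposition.transpose i d) d = d"
    using assms(3) by simp
  moreover have "x = d" if "x \<in> {1..d} - {1..d - 1}" for x
    using that by auto
  ultimately show ?thesis
    by (metis permutes_superset)
qed

lemma hom_to_smaller_sym_group:
  fixes d :: nat
  assumes \<rho>: "\<rho> \<in> hom H (sym_group d)" and i: "i \<in> {1..d}" "\<And>x. x \<in> carrier H \<Longrightarrow> \<rho> x i = i"
  shows "(\<lambda>x. Transposition.transpose i d \<circ> \<rho> x \<circ> Transposition.transpose i d) \<in> hom H (sym_group (d - 1))"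
proof (rule homI)
  fix x assume "x \<in> carrier H"
  then show "Transposition.transpose i d \<circ> \<rho> x \<circ> Transposition.transpose i d \<in> carrier (sym_group (d - 1))"
    using conj_transpose_permutes[OF i(1)] hom_in_carrier[OF \<rho>] i(2) by (simp add: sym_group_carrier)
next
  fix x y assume "x \<in> carrier H" "y \<in> carrier H"
  then show "Transposition.transpose i d \<circ> \<rho> (x \<otimes>\<^bsub>H\<^esub> y) \<circ> Transposition.transpose i d =
      (Transposition.transpose i d \<circ> \<rho> x \<circ> Transposition.transpose i d) \<otimes>\<^bsub>sym_group (d - 1)\<^esub>
      (Transposition.transpose i d \<circ> \<rho> y \<circ> Transposition.transpose i d)"
    using hom_mult[OF \<rho>] by (simp add: sym_group_mult fun_eq_iff)
qed

lemma subquotient_of_smaller_sym_group: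
  fixes d :: nat
  assumes \<rho>: "group_hom H (sym_group d) \<rho>" and \<phi>: "group_hom H A \<phi>" "\<phi> ` carrier H = carrier A"
    and kernel: "\<And>x. x \<in> carrier H \<Longrightarrow> \<rho> x = id \<Longrightarrow> \<phi> x = \<one>\<^bsub>A\<^esub>"
    and i: "i \<in> {1..d}" "\<And>x. x \<in> carrier H \<Longrightarrow> \<rho> x i = i"
  shows "\<exists>H' N. subgroup H' (sym_group (d - 1)) \<and>
           N \<lhd> (sym_group (d - 1))\<lparr>carrier := H'\<rparr> \<and> (sym_group (d - 1))\<lparr>carrier := H'\<rparr> Mod N \<cong> A"
proof -
  define \<rho>' where "\<rho>' x = Transposition.transpose i d \<circ> \<rho> x \<circ> Transposition.transpose i d" for x
  have "\<rho>' \<in> hom H (sym_group (d - 1))"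
    unfolding \<rho>'_def using hom_to_smaller_sym_group[OF group_hom.homh[OF \<rho>] i] .
  then have \<rho>': "group_hom H (sym_group (d - 1)) \<rho>'"
    using \<rho> sym_group_is_group unfolding group_hom_def group_hom_axioms_def by blast
  have "\<rho> x = id" if "\<rho>' x = id" for x
    using that unfolding \<rho>'_def by (simp add: fun_eq_iff) (metis transpose_involutory)
  then show ?thesis
    using quotient_of_image_if_kernel_le[OF \<rho>' \<phi>] kernel by (auto simp: sym_group_one)
qed

section \<open>Factor maps\<close>

text \<open>The map \<phi> induces an isomorphism P/Q \<cong> A.\<close>

definition factor_map ::
  "('a, 'b) monoid_scheme \<Rightarrow> 'a set \<Rightarrow> 'a set \<Rightarrow> ('c, 'd) monoid_scheme \<Rightarrow> ('a \<Rightarrow> 'c) \<Rightarrow> bool" where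
  "factor_map G P Q A \<phi> \<longleftrightarrow> subgroup P G \<and> Q \<subseteq> P \<and> group_hom (G\<lparr>carrier := P\<rparr>) A \<phi> \<and>
     \<phi> ` P = carrier A \<and> (\<forall>p\<in>P. \<phi> p = \<one>\<^bsub>A\<^esub> \<longleftrightarrow> p \<in> Q)"

lemma factor_map_quotient:
  assumes "group G" "subgroup M G" "N \<lhd> G\<lparr>carrier := M\<rparr>" "f \<in> iso (G\<lparr>carrier := M\<rparr> Mod N) A" "group A"
  shows "factor_map G M N A (\<lambda>m. f (N #>\<^bsub>G\<lparr>carrier := M\<rparr>\<^esub> m))"
proof -
  interpret N: normal N "G\<lparr>carrier := M\<rparr>" by fact
  have f: "group_hom (G\<lparr>carrier := M\<rparr> Mod N) A f" "f ` carrier (G\<lparr>carrier := M\<rparr> Mod N) = carrier A"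
      "inj_on f (carrier (G\<lparr>carrier := M\<rparr> Mod N))"
    using assms(4,5) N.factorgroup_is_group unfolding iso_iff group_hom_def group_hom_axioms_def by auto
  have proj: "(\<lambda>m. N #>\<^bsub>G\<lparr>carrier := M\<rparr>\<^esub> m) \<in> hom (G\<lparr>carrier := M\<rparr>) (G\<lparr>carrier := M\<rparr> Mod N)"
    by (rule N.r_coset_hom_Mod)
  have kernel: "f (N #>\<^bsub>G\<lparr>carrier := M\<rparr>\<^esub> m) = \<one>\<^bsub>A\<^esub> \<longleftrightarrow> m \<in> N" if "m \<in> M" for m
  proof -
    have "N #>\<^bsub>G\<lparr>carrier := M\<rparr>\<^esub> m \<in> carrier (G\<lparr>carrier := M\<rparr> Mod N)"
      using hom_in_carrier[OF proj] that by simp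
    then have "f (N #>\<^bsub>G\<lparr>carrier := M\<rparr>\<^esub> m) = \<one>\<^bsub>A\<^esub> \<longleftrightarrow> N #>\<^bsub>G\<lparr>carrier := M\<rparr>\<^esub> m = N"
      using inj_on_eq_iff[OF f(3)] group_hom.hom_one[OF f(1)] N.factorgroup_is_group
      by (metis one_FactGroup group.is_monoid monoid.one_closed)
    also have "\<dots> \<longleftrightarrow> m \<in> N"
      using N.rcos_self[OF _ N.subgroup_axioms, of m] N.rcos_const[OF N.is_group, of m] that by auto
    finally show ?thesis .
  qed
  have "group_hom (G\<lparr>carrier := M\<rparr>) A (f \<circ> (\<lambda>m. N #>\<^bsub>G\<lparr>carrier := M\<rparr>\<^esub> m))"
    using group_hom.axioms(1)[OF f(1)] N.is_group assms(5) hom_compose[OF proj] f(1)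
    unfolding group_hom_def group_hom_axioms_def by blast
  moreover have "(\<lambda>m. f (N #>\<^bsub>G\<lparr>carrier := M\<rparr>\<^esub> m)) ` M = carrier A"
    using f(2) unfolding carrier_FactGroup image_image by simp
  ultimately show ?thesis
    unfolding factor_map_def o_def
    using assms(2) kernel N.subgroup_axioms subgroup.subset by fastforce
qed

lemma factor_map_pullback:
  assumes "factor_map H M N A \<psi>" "group_hom G H h" "M \<subseteq> h ` carrier G"
  shows "factor_map G {g \<in> carrier G. h g \<in> M} {g \<in> carrier G. h g \<in> N} A (\<psi> \<circ> h)"
proof -
  interpret h: group_hom G H h by fact
  have M: "subgroup M H" and \<psi>: "group_hom (H\<lparr>carrier := M\<rparr>) A \<psi>"
    using assms(1) unfolding factor_map_def by auto
  have P: "subgroup {g \<in> carrier G. h g \<in> M} G"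
    using subgroup.one_closed[OF M] subgroup.m_closed[OF M] subgroup.m_inv_closed[OF M]
    by (intro h.G.subgroupI) auto
  have "h \<in> hom (G\<lparr>carrier := {g \<in> carrier G. h g \<in> M}\<rparr>) (H\<lparr>carrier := M\<rparr>)"
    unfolding hom_def by auto
  then have "group_hom (G\<lparr>carrier := {g \<in> carrier G. h g \<in> M}\<rparr>) A (\<psi> \<circ> h)"
    using \<psi> h.G.subgroup_imp_group[OF P] hom_compose
    unfolding group_hom_def group_hom_axioms_def by blast
  moreover have "(\<psi> \<circ> h) ` {g \<in> carrier G. h g \<in> M} = carrier A"
  proof -
    have "h ` {g \<in> carrier G. h g \<in> M} = M"
      using assms(3) by auto
    then show ?thesis
      using assms(1) unfolding factor_map_def by (metis image_comp)
  qed
  ultimately show ?thesis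
    using assms(1) P unfolding factor_map_def by auto
qed

lemma composition_series_subgroup:
  assumes "group G" "composition_series G T U S" "subgroup U G"
  shows "subgroup (S m) G \<and> S m \<subseteq> U"
proof (induction m)
  case 0
  then show ?case
    using assms(2,3) unfolding composition_series_def by simp
next
  case (Suc m)
  have "subgroup (S (Suc m)) (G\<lparr>carrier := S m\<rparr>)"
    using assms(2) normal_imp_subgroup unfolding composition_series_def by blast
  then show ?case
    using group.incl_subgroup[OF assms(1)] Suc subgroup.subset by fastforce
qed

lemma factor_map_of_composition_factor:
  assumes G: "group G" and "composition_factor G T U A" "subgroup U G" "group A"
  obtains M N \<psi> where "factor_map G M N A \<psi>" "subgroup N G" "M \<subseteq> U" "closedin T M" "closedin T N"
proof -
  obtain S n where S: "composition_series G T U S" and "G\<lparr>carrier := S n\<rparr> Mod S (Suc n) \<cong> A"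
    using assms(2) unfolding composition_factor_def by blast
  then obtain f where f: "f \<in> iso (G\<lparr>carrier := S n\<rparr> Mod S (Suc n)) A"
    unfolding is_iso_def by blast
  have SU: "subgroup (S m) G" "S m \<subseteq> U" for m
    using composition_series_subgroup[OF G S assms(3)] by auto
  have "S (Suc n) \<lhd> G\<lparr>carrier := S n\<rparr>" and closed: "closedin T (S m)" for m
    using S unfolding composition_series_def by simp_all
  then show thesis
    using that factor_map_quotient[OF G SU(1) _ f assms(4)] SU closed by blast
qed

lemma exists_closed_factor_map:
  fixes G (structure)
  assumes tg: "topological_group G T" and K: "K \<lhd> G"
    and H0: "subgroup H0 G" "K \<subseteq> H0" "compactin T H0" "openin T H0"
    and lsc: "in_local_simple_content (G Mod K) (quot_topology G T K) A"
  shows "\<exists>P Q \<phi>. factor_map G P Q A \<phi> \<and> P \<subseteq> H0 \<and> K \<subseteq> Q \<and> closedin T P \<and> closedin T Q"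
proof -
  interpret K: normal K G by fact
  have top: "topspace T = carrier G"
    using tg unfolding topological_group_def by simp
  note U = compact_open_subgroup_quotient[OF tg K H0]
  have "composition_factor (G Mod K) (quot_topology G T K) ((\<lambda>g. K #> g) ` H0) A" "group A"
    using lsc U(1-3) unfolding in_local_simple_content_def by blast+
  then obtain M N \<psi> where M: "factor_map (G Mod K) M N A \<psi>" "subgroup N (G Mod K)"
      "M \<subseteq> (\<lambda>g. K #> g) ` H0"
    and closed: "closedin (quot_topology G T K) M" "closedin (quot_topology G T K) N"
    using factor_map_of_composition_factor[OF K.factorgroup_is_group _ U(1)] by blast
  have MN: "subgroup M (G Mod K)" "subgroup N (G Mod K)"
    using M(1,2) unfolding factor_map_def by auto
  have "group_hom G (G Mod K) (\<lambda>g. K #> g)"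
    using K.r_coset_hom_Mod K.factorgroup_is_group unfolding group_hom_def group_hom_axioms_def
    by (simp add: K.is_group)
  moreover have "M \<subseteq> (\<lambda>g. K #> g) ` carrier G"
    using subgroup.subset[OF MN(1)] unfolding carrier_FactGroup .
  ultimately have "factor_map G {g \<in> carrier G. K #> g \<in> M} {g \<in> carrier G. K #> g \<in> N} A
      (\<psi> \<circ> (\<lambda>g. K #> g))"
    using factor_map_pullback[OF M(1)] by blast
  then have "factor_map G (\<Union>M) (\<Union>N) A (\<psi> \<circ> (\<lambda>g. K #> g))"
    by (simp only: K.factgroup_subgroup_union_char[OF MN(1)] K.factgroup_subgroup_union_char[OF MN(2)])
  moreover have "\<Union>M \<subseteq> H0"
    using M(3) U(4) by blast
  moreover have "K \<subseteq> \<Union>N"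
    using subgroup.one_closed[OF MN(2)] by (simp add: Union_upper)
  moreover have "closedin T (\<Union>M)" "closedin T (\<Union>N)"
    using closedin_quot_topology_Union[OF K.is_group K.subgroup_axioms top] closed by auto
  ultimately show ?thesis
    by (intro exI conjI)
qed

lemma factor_map_fibre:
  assumes "group G" "factor_map G P Q A \<phi>" "p \<in> P"
  shows "{g \<in> P. \<phi> g = \<phi> p} = {g \<in> carrier G. inv\<^bsub>G\<^esub> p \<otimes>\<^bsub>G\<^esub> g \<in> Q}"
proof -
  interpret G: group G by fact
  have P: "subgroup P G" and "Q \<subseteq> P" and \<phi>: "group_hom (G\<lparr>carrier := P\<rparr>) A \<phi>"
    and kernel: "\<And>p. p \<in> P \<Longrightarrow> \<phi> p = \<one>\<^bsub>A\<^esub> \<longleftrightarrow> p \<in> Q"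
    using assms(2) unfolding factor_map_def by auto
  interpret \<phi>: group_hom "G\<lparr>carrier := P\<rparr>" A \<phi> by fact
  have PG: "P \<subseteq> carrier G"
    using subgroup.subset[OF P] .
  have ip: "inv\<^bsub>G\<^esub> p \<in> P"
    using subgroup.m_inv_closed[OF P assms(3)] .
  have pG: "p \<in> carrier G"
    using PG assms(3) by blast
  have "\<phi> g = \<phi> p \<longleftrightarrow> inv\<^bsub>G\<^esub> p \<otimes>\<^bsub>G\<^esub> g \<in> Q" if "g \<in> P" for g
  proof -
    have "\<phi> (inv\<^bsub>G\<^esub> p \<otimes>\<^bsub>G\<^esub> g) = inv\<^bsub>A\<^esub> \<phi> p \<otimes>\<^bsub>A\<^esub> \<phi> g"
      using \<phi>.hom_mult[of "inv\<^bsub>G\<^esub> p" g] \<phi>.hom_inv[of p] G.m_inv_consistent[OF P assms(3)] ip that assms(3)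
      by simp
    moreover have "inv\<^bsub>A\<^esub> \<phi> p \<otimes>\<^bsub>A\<^esub> \<phi> g = \<one>\<^bsub>A\<^esub> \<longleftrightarrow> \<phi> g = \<phi> p"
      using \<phi>.hom_closed that assms(3) by (simp add: \<phi>.H.inv_mult_eq_one_iff)
    ultimately show ?thesis
      using kernel[of "inv\<^bsub>G\<^esub> p \<otimes>\<^bsub>G\<^esub> g"] subgroup.m_closed[OF P ip that] by simp
  qed
  moreover have "g \<in> P" if "g \<in> carrier G" "inv\<^bsub>G\<^esub> p \<otimes>\<^bsub>G\<^esub> g \<in> Q" for g
  proof -
    have "inv\<^bsub>G\<^esub> p \<otimes>\<^bsub>G\<^esub> g \<in> P"
      using that(2) \<open>Q \<subseteq> P\<close> by blast
    then have "p \<otimes>\<^bsub>G\<^esub> (inv\<^bsub>G\<^esub> p \<otimes>\<^bsub>G\<^esub> g) \<in> P"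
      by (rule subgroup.m_closed[OF P assms(3)])
    then show ?thesis
      using that(1) pG by (simp add: G.m_assoc[symmetric])
  qed
  ultimately show ?thesis
    using PG by blast
qed

lemma closedin_factor_map_diff:
  assumes tg: "topological_group G T" and fm: "factor_map G P Q A \<phi>"
    and "finite (carrier A)" "closedin T Q"
  shows "closedin T (P - Q)"
proof -
  have G: "group G"
    using tg unfolding topological_group_def by simp
  have P: "subgroup P G" and onto: "\<phi> ` P = carrier A"
    and kernel: "\<And>p. p \<in> P \<Longrightarrow> \<phi> p = \<one>\<^bsub>A\<^esub> \<longleftrightarrow> p \<in> Q"
    using fm unfolding factor_map_def by auto
  have PG: "P \<subseteq> carrier G"
    using subgroup.subset[OF P] .
  have "closedin T {g \<in> P. \<phi> g = a}" if a: "a \<in> carrier A" for a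
  proof -
    have "a \<in> \<phi> ` P"
      using a onto by simp
    then obtain p where p: "p \<in> P" "\<phi> p = a"
      by blast
    have "inv\<^bsub>G\<^esub> p \<in> carrier G"
      using p(1) PG group.inv_closed[OF G] by blast
    then have "closedin T {g \<in> carrier G. inv\<^bsub>G\<^esub> p \<otimes>\<^bsub>G\<^esub> g \<in> Q}"
      using closedin_left_mult_preimage[OF tg _ assms(4)] by blast
    then show ?thesis
      unfolding factor_map_fibre[OF G fm p(1), symmetric] p(2) .
  qed
  moreover have "P - Q = (\<Union>a\<in>carrier A - {\<one>\<^bsub>A\<^esub>}. {g \<in> P. \<phi> g = a})"
    using kernel onto by blast
  ultimately show ?thesis
    using assms(3) by (auto intro: closedin_Union)
qed

lemma factor_map_image_subset_kernel:
  assumes "factor_map G P Q A \<phi>" "simple_group A" "R \<subseteq> Q"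
  shows "\<phi> ` R \<noteq> carrier A"
proof
  assume onto: "\<phi> ` R = carrier A"
  have "\<phi> ` R \<subseteq> {\<one>\<^bsub>A\<^esub>}"
    using assms(1,3) unfolding factor_map_def by blast
  moreover have "\<one>\<^bsub>A\<^esub> \<in> carrier A"
    using assms(2) by (simp add: group.is_monoid monoid.one_closed simple_group.axioms(1))
  ultimately show False
    using simple_group.simple_not_triv[OF assms(2)] onto by blast
qed

definition fixer :: "('a \<Rightarrow> 'v \<Rightarrow> 'v) \<Rightarrow> 'a set \<Rightarrow> 'v set \<Rightarrow> 'a set" where
  "fixer act P Y = {g \<in> P. \<forall>y\<in>Y. act g y = y}"

lemma finite_fixer_subset:
  assumes tg: "topological_group G T" and ga: "group_action G V act"
    and "\<forall>v\<in>V. openin T (stabilizer G act v)"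
    and "compactin T (P - Q)" "P \<subseteq> carrier G" "action_kernel G V act \<subseteq> Q"
  shows "\<exists>F. finite F \<and> F \<subseteq> V \<and> fixer act P F \<subseteq> Q"
proof -
  define moved where "moved v = carrier G - stabilizer G act v" for v
  have top: "topspace T = carrier G"
    using tg unfolding topological_group_def by simp
  have "openin T (moved v)" if "v \<in> V" for v
    unfolding moved_def top[symmetric] using closedin_stabilizer[OF tg ga that assms(3)] by blast
  moreover have "P - Q \<subseteq> \<Union>(moved ` V)"
    using assms(5,6) unfolding moved_def action_kernel_def stabilizer_def by blast
  ultimately obtain \<F> where "finite \<F>" "\<F> \<subseteq> moved ` V" "P - Q \<subseteq> \<Union>\<F>"
    using compactinD[OF assms(4), of "moved ` V"] by blast
  then obtain F where F: "finite F" "F \<subseteq> V" "P - Q \<subseteq> \<Union>(moved ` F)"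
    by (metis finite_subset_image)
  have "fixer act P F \<subseteq> Q"
    using F(3) unfolding fixer_def moved_def stabilizer_def by blast
  then show ?thesis
    using F(1,2) by blast
qed

lemma factor_map_with_finite_support:
  assumes tg: "topological_group G T" and ga: "group_action G V act"
    and stab: "\<forall>v\<in>V. compactin T (stabilizer G act v) \<and> openin T (stabilizer G act v)"
    and "\<alpha> \<in> V" "u \<in> V"
    and lsc: "in_local_simple_content (G Mod action_kernel G V act) (quot_topology G T (action_kernel G V act)) A"
  obtains P Q \<phi> F where "factor_map G P Q A \<phi>" "P \<subseteq> stabilizer G act \<alpha> \<inter> stabilizer G act u"
    "finite F" "F \<subseteq> V" "fixer act P F \<subseteq> Q"
proof -
  have H0: "subgroup (stabilizer G act \<alpha> \<inter> stabilizer G act u) G"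
    "action_kernel G V act \<subseteq> stabilizer G act \<alpha> \<inter> stabilizer G act u"
    using group.subgroups_Inter_pair group_action.stabilizer_subgroup[OF ga] assms(4,5) tg
    unfolding action_kernel_def stabilizer_def topological_group_def by auto
  obtain P Q \<phi> where P: "factor_map G P Q A \<phi>" "P \<subseteq> stabilizer G act \<alpha> \<inter> stabilizer G act u"
    "action_kernel G V act \<subseteq> Q" "closedin T Q"
    using exists_closed_factor_map[OF tg action_kernel_normal[OF ga] H0
        compact_open_stabilizer_pair[OF tg ga stab assms(4,5)] lsc] by blast
  have "closedin T (P - Q)"
    using closedin_factor_map_diff[OF tg P(1) _ P(4)] lsc unfolding in_local_simple_content_def by blast
  then have "compactin T (P - Q)"
    using closed_compactin[of T "stabilizer G act \<alpha>"] stab assms(4) P(2) by blast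
  moreover have "P \<subseteq> carrier G"
    using P(1) subgroup.subset unfolding factor_map_def by blast
  ultimately obtain F where "finite F" "F \<subseteq> V" "fixer act P F \<subseteq> Q"
    using finite_fixer_subset[OF tg ga _ _ _ P(3)] stab by (metis (no_types))
  then show thesis
    using that P(1,2) by blast
qed

section \<open>Neighbourhood-grown vertex sets\<close>

inductive nbhd_grown :: "('v \<Rightarrow> 'v \<Rightarrow> bool) \<Rightarrow> 'v \<Rightarrow> 'v \<Rightarrow> 'v set \<Rightarrow> bool" for E \<alpha> u where
  base: "nbhd_grown E \<alpha> u {\<alpha>, u}"
| step: "nbhd_grown E \<alpha> u Y \<Longrightarrow> w \<in> Y \<Longrightarrow> nbhd_grown E \<alpha> u (Y \<union> nbhd E w)"

lemma nbhd_grown_base_mem: "nbhd_grown E \<alpha> u Y \<Longrightarrow> \<alpha> \<in> Y"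
  by (induction rule: nbhd_grown.induct) auto

lemma nbhd_grown_subset:
  assumes "\<And>x y. E x y \<Longrightarrow> x \<in> V \<and> y \<in> V" "\<alpha> \<in> V" "u \<in> V" "nbhd_grown E \<alpha> u Y"
  shows "Y \<subseteq> V"
  using assms(4) by (induction rule: nbhd_grown.induct) (use assms(1-3) in \<open>auto simp: nbhd_def\<close>)

lemma nbhd_grown_reach:
  assumes "(\<alpha>, v) \<in> {(x, y). E x y}\<^sup>*" "nbhd_grown E \<alpha> u Y"
  shows "\<exists>Y'. nbhd_grown E \<alpha> u Y' \<and> Y \<subseteq> Y' \<and> v \<in> Y'"
  using assms(1)
proof (induction rule: rtrancl_induct)
  case base
  then show ?case
    using assms(2) nbhd_grown_base_mem[OF assms(2)] by blast
next
  case (step x y)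
  then obtain Y' where "nbhd_grown E \<alpha> u Y'" "Y \<subseteq> Y'" "x \<in> Y'"
    by blast
  moreover have "y \<in> Y' \<union> nbhd E x"
    using step(2) unfolding nbhd_def by simp
  ultimately show ?case
    using nbhd_grown.step[of E \<alpha> u Y' x] by blast
qed

lemma nbhd_grown_cover:
  assumes "finite F" "\<forall>v\<in>F. (\<alpha>, v) \<in> {(x, y). E x y}\<^sup>*"
  shows "\<exists>Y. nbhd_grown E \<alpha> u Y \<and> F \<subseteq> Y"
  using assms
proof (induction F rule: finite_induct)
  case empty
  then show ?case
    using nbhd_grown.base[of E \<alpha> u] by blast
next
  case (insert v F)
  then obtain Y where "nbhd_grown E \<alpha> u Y" "F \<subseteq> Y"
    by blast
  then show ?case
    using nbhd_grown_reach[of \<alpha> v E u Y] insert.prems by blast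
qed

lemma nbhd_grown_neighbour:
  assumes sym: "\<And>x y. E x y \<Longrightarrow> E y x" and u: "E \<alpha> u \<or> (u = \<alpha> \<and> nbhd E \<alpha> = {})"
    and "nbhd_grown E \<alpha> u Y" "y \<in> Y" "nbhd E y \<noteq> {}"
  shows "\<exists>z\<in>Y. E y z"
  using assms(3-5)
proof (induction arbitrary: y rule: nbhd_grown.induct)
  case base
  then show ?case
    using u sym unfolding nbhd_def by auto
next
  case (step Y w)
  then show ?case
    using sym unfolding nbhd_def by blast
qed

lemma nbhd_grown_threshold:
  assumes "Good {\<alpha>, u}" "nbhd_grown E \<alpha> u Y" "\<not> Good Y"
  shows "\<exists>Y0 w. nbhd_grown E \<alpha> u Y0 \<and> w \<in> Y0 \<and> Good Y0 \<and> \<not> Good (Y0 \<union> nbhd E w)"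
  using assms(2,3)
proof (induction rule: nbhd_grown.induct)
  case base
  then show ?case
    using assms(1) by blast
next
  case (step Y w)
  then show ?case
    by blast
qed

lemma fixer_image_threshold:
  assumes "\<forall>v\<in>F. (\<alpha>, v) \<in> {(x, y). E x y}\<^sup>*" "finite F"
    and fm: "factor_map G P Q A \<phi>" "simple_group A"
    and "fixer act P {\<alpha>, u} = P" "fixer act P F \<subseteq> Q"
  obtains Y w where "nbhd_grown E \<alpha> u Y" "w \<in> Y" "\<phi> ` fixer act P Y = carrier A"
    "\<phi> ` fixer act P (Y \<union> nbhd E w) \<noteq> carrier A"
proof -
  obtain Yf where Yf: "nbhd_grown E \<alpha> u Yf" "F \<subseteq> Yf"
    using nbhd_grown_cover[OF assms(2,1)] by blast
  have "fixer act P Yf \<subseteq> Q"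
    using assms(6) Yf(2) unfolding fixer_def by blast
  then have "\<phi> ` fixer act P Yf \<noteq> carrier A"
    using factor_map_image_subset_kernel[OF fm] by blast
  moreover have "\<phi> ` fixer act P {\<alpha>, u} = carrier A"
    using assms(3,5) unfolding factor_map_def by simp
  ultimately show thesis
    using that nbhd_grown_threshold[of "\<lambda>Y. \<phi> ` fixer act P Y = carrier A", OF _ Yf(1)] by blast
qed

section \<open>Groups acting on graphs\<close>

locale graph_action = group G + group_action G V act for G (structure) and V and act +
  fixes E :: "'v \<Rightarrow> 'v \<Rightarrow> bool"
  assumes edge_in_V: "E u w \<Longrightarrow> u \<in> V \<and> w \<in> V"
    and edge_sym: "E u w \<Longrightarrow> E w u"
    and act_edge_iff: "g \<in> carrier G \<Longrightarrow> u \<in> V \<Longrightarrow> w \<in> V \<Longrightarrow> E (act g u) (act g w) \<longleftrightarrow> E u w"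
begin

lemma act_closed: "g \<in> carrier G \<Longrightarrow> x \<in> V \<Longrightarrow> act g x \<in> V"
  using element_image[OF _ _ refl] .

lemma act_inj:
  assumes "g \<in> carrier G" "x \<in> V" "y \<in> V" "act g x = act g y"
  shows "x = y"
proof -
  have "x = act (inv g) (act g x)"
    using act_inv_act[OF assms(1,2)] by simp
  also have "\<dots> = y"
    using assms(4) act_inv_act[OF assms(1,3)] by simp
  finally show ?thesis .
qed

lemma act_conj:
  assumes "g \<in> carrier G" "x \<in> carrier G" "v \<in> V"
  shows "act (g \<otimes> x \<otimes> inv g) (act g v) = act g (act x v)"
proof -
  have "act (g \<otimes> x \<otimes> inv g) (act g v) = act (g \<otimes> x) (act (inv g) (act g v))"
    using composition_rule[of "act g v" "g \<otimes> x" "inv g"] assms act_closed by simp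
  also have "\<dots> = act (g \<otimes> x) v"
    using act_inv_act[OF assms(1,3)] by simp
  also have "\<dots> = act g (act x v)"
    using composition_rule[OF assms(3,1,2)] .
  finally show ?thesis .
qed

lemma nbhd_subset: "nbhd E v \<subseteq> V"
  unfolding nbhd_def using edge_in_V by blast

lemma act_nbhd: "g \<in> carrier G \<Longrightarrow> v \<in> V \<Longrightarrow> x \<in> nbhd E v \<Longrightarrow> act g x \<in> nbhd E (act g v)"
  unfolding nbhd_def using act_edge_iff edge_in_V by blast

lemma fixer_subgroup:
  assumes P: "subgroup P G" and Y: "Y \<subseteq> V"
  shows "subgroup (fixer act P Y) G"
proof (rule subgroupI)
  show "fixer act P Y \<subseteq> carrier G"
    unfolding fixer_def using subgroup.subset[OF P] by blast
  show "fixer act P Y \<noteq> {}"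
    unfolding fixer_def using subgroup.one_closed[OF P] act_one Y by blast
next
  fix a assume a: "a \<in> fixer act P Y"
  then have "a \<in> P" "a \<in> carrier G"
    using subgroup.subset[OF P] unfolding fixer_def by auto
  moreover have "act (inv a) y = y" if "y \<in> Y" for y
    using a act_inv_act[of a y] that Y \<open>a \<in> carrier G\<close> unfolding fixer_def by auto
  ultimately show "inv a \<in> fixer act P Y"
    unfolding fixer_def using subgroup.m_inv_closed[OF P] by blast
next
  fix a b assume a: "a \<in> fixer act P Y" and b: "b \<in> fixer act P Y"
  then have "a \<in> P" "b \<in> P" "a \<in> carrier G" "b \<in> carrier G"
    using subgroup.subset[OF P] unfolding fixer_def by auto
  moreover have "act (a \<otimes> b) y = y" if "y \<in> Y" for y
    using a b composition_rule[of y a b] that Y \<open>a \<in> carrier G\<close> \<open>b \<in> carrier G\<close>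
    unfolding fixer_def by auto
  ultimately show "a \<otimes> b \<in> fixer act P Y"
    unfolding fixer_def using subgroup.m_closed[OF P] by blast
qed

lemma fixer_conj_closed:
  assumes P: "subgroup P G" and Y: "Y \<subseteq> V" "w \<in> Y"
    and x: "x \<in> fixer act P Y" and x': "x' \<in> fixer act P (Y \<union> nbhd E w)"
  shows "x \<otimes> x' \<otimes> inv x \<in> fixer act P (Y \<union> nbhd E w)"
proof -
  have "x \<in> P" "x' \<in> P"
    using x x' unfolding fixer_def by auto
  then have xG: "x \<in> carrier G" and x'G: "x' \<in> carrier G" and "x \<otimes> x' \<otimes> inv x \<in> P"
    using subgroup.subset[OF P] subgroup.m_closed[OF P] subgroup.m_inv_closed[OF P] by auto
  moreover have "act (x \<otimes> x' \<otimes> inv x) y = y" if y: "y \<in> Y \<union> nbhd E w" for y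
  proof -
    have yV: "y \<in> V"
      using y Y(1) nbhd_subset by blast
    have ix: "inv x \<in> fixer act P Y"
      using fixer_subgroup[OF P Y(1)] x by (rule subgroup.m_inv_closed)
    have "act (inv x) y \<in> Y \<union> nbhd E w"
    proof (cases "y \<in> Y")
      case True
      then show ?thesis
        using ix unfolding fixer_def by simp
    next
      case False
      then have "act (inv x) y \<in> nbhd E (act (inv x) w)"
        using y xG Y act_nbhd[of "inv x" w y] by blast
      then show ?thesis
        using ix Y(2) unfolding fixer_def by simp
    qed
    then have "act x' (act (inv x) y) = act (inv x) y"
      using x' unfolding fixer_def by blast
    moreover have "act x (act (inv x) y) = y"
      using act_act_inv[OF xG yV] .
    ultimately show ?thesis
      using act_conj[OF xG x'G act_closed[OF inv_closed[OF xG] yV]] by simp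
  qed
  ultimately show ?thesis
    unfolding fixer_def by blast
qed

lemma fixer_nbhd_image_trivial:
  assumes fm: "factor_map G P Q A \<phi>" and A: "simple_group A"
    and Y: "Y \<subseteq> V" "w \<in> Y" "\<phi> ` fixer act P Y = carrier A"
    and proper: "\<phi> ` fixer act P (Y \<union> nbhd E w) \<noteq> carrier A"
  shows "\<phi> ` fixer act P (Y \<union> nbhd E w) = {\<one>\<^bsub>A\<^esub>}"
proof (rule image_of_normalized_subgroup_trivial[OF is_group _ A _ _ Y(3) _ _ _ proper])
  have P: "subgroup P G"
    using fm unfolding factor_map_def by blast
  show "group_hom (G\<lparr>carrier := P\<rparr>) A \<phi>"
    using fm unfolding factor_map_def by blast
  show "subgroup (fixer act P Y) G" "subgroup (fixer act P (Y \<union> nbhd E w)) G"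
    using fixer_subgroup[OF P] Y(1) nbhd_subset by auto
  show "fixer act P Y \<subseteq> P" "fixer act P (Y \<union> nbhd E w) \<subseteq> fixer act P Y"
    unfolding fixer_def by auto
  show "x \<otimes> y \<otimes> inv x \<in> fixer act P (Y \<union> nbhd E w)"
    if "x \<in> fixer act P Y" "y \<in> fixer act P (Y \<union> nbhd E w)" for x y
    using fixer_conj_closed[OF P Y(1,2) that] .
qed

lemma critical_vertex:
  assumes conn: "\<forall>v\<in>V. (\<alpha>, v) \<in> {(x, y). E x y}\<^sup>*" and "\<alpha> \<in> V"
    and u: "E \<alpha> u \<or> (u = \<alpha> \<and> nbhd E \<alpha> = {})"
    and fm: "factor_map G P Q A \<phi>" and A: "simple_group A"
    and P: "P \<subseteq> stabilizer G act \<alpha> \<inter> stabilizer G act u"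
    and F: "finite F" "F \<subseteq> V" "fixer act P F \<subseteq> Q"
  shows "\<exists>w z M. w \<in> V \<and> z \<in> nbhd E w \<and> subgroup M G \<and> M \<subseteq> stabilizer G act w \<and>
           (\<forall>x\<in>M. act x z = z) \<and> group_hom (G\<lparr>carrier := M\<rparr>) A \<phi> \<and> \<phi> ` M = carrier A \<and>
           (\<forall>x\<in>M. (\<forall>y\<in>nbhd E w. act x y = y) \<longrightarrow> \<phi> x = \<one>\<^bsub>A\<^esub>)"
proof -
  have Psub: "subgroup P G" and \<phi>: "group_hom (G\<lparr>carrier := P\<rparr>) A \<phi>"
    using fm unfolding factor_map_def by auto
  have "fixer act P {\<alpha>, u} = P"
    using P unfolding fixer_def stabilizer_def by auto
  moreover have "\<forall>v\<in>F. (\<alpha>, v) \<in> {(x, y). E x y}\<^sup>*"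
    using conn F(2) by blast
  ultimately obtain Y w where Y: "nbhd_grown E \<alpha> u Y" "w \<in> Y" "\<phi> ` fixer act P Y = carrier A"
      "\<phi> ` fixer act P (Y \<union> nbhd E w) \<noteq> carrier A"
    using fixer_image_threshold[OF _ F(1) fm A _ F(3)] by metis
  have YV: "Y \<subseteq> V"
    using nbhd_grown_subset[OF _ \<open>\<alpha> \<in> V\<close> _ Y(1)] edge_in_V u \<open>\<alpha> \<in> V\<close> by blast
  have "nbhd E w \<noteq> {}"
    using Y(3,4) by auto
  then obtain z where z: "z \<in> Y" "E w z"
    using nbhd_grown_neighbour[OF _ u Y(1,2)] edge_sym by blast
  define M where "M = fixer act P Y"
  have M: "subgroup M G" "M \<subseteq> P"
    unfolding M_def using fixer_subgroup[OF Psub YV] by (auto simp: fixer_def)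
  have "\<phi> x = \<one>\<^bsub>A\<^esub>" if "x \<in> M" "\<forall>y\<in>nbhd E w. act x y = y" for x
    using fixer_nbhd_image_trivial[OF fm A YV Y(2-4)] that unfolding M_def fixer_def by blast
  moreover have "w \<in> V" "z \<in> nbhd E w" "M \<subseteq> stabilizer G act w" "\<forall>x\<in>M. act x z = z"
    using YV Y(2) z M(2) Psub subgroup.subset unfolding M_def fixer_def stabilizer_def nbhd_def by auto
  moreover have "group_hom (G\<lparr>carrier := M\<rparr>) A \<phi>"
    using group_hom_restrict_subgroup[OF is_group \<phi> M] .
  ultimately show ?thesis
    using M(1) Y(3) unfolding M_def by blast
qed

end

locale local_frame = graph_action +
  fixes \<alpha> :: 'v and \<beta> :: "'v \<Rightarrow> nat" and d :: nat
  assumes base_in_V: "\<alpha> \<in> V"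
    and numbering: "bij_betw \<beta> (nbhd E \<alpha>) {1..d}"
begin

definition local_perm :: "'a \<Rightarrow> nat \<Rightarrow> nat" where
  "local_perm g = (\<lambda>i. if i \<in> {1..d} then \<beta> (act g (inv_into (nbhd E \<alpha>) \<beta> i)) else i)"

lemma local_perm_in_local_action:
  "g \<in> stabilizer G act \<alpha> \<Longrightarrow> local_perm g \<in> local_action G E act \<alpha> \<beta> d"
  unfolding local_action_def local_perm_def by blast

lemma act_stabilizer_nbhd:
  "g \<in> stabilizer G act \<alpha> \<Longrightarrow> x \<in> nbhd E \<alpha> \<Longrightarrow> act g x \<in> nbhd E \<alpha>"
  using act_nbhd[of g \<alpha> x] base_in_V unfolding stabilizer_def by auto

lemma local_perm_numbering:
  assumes "x \<in> nbhd E \<alpha>"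
  shows "local_perm g (\<beta> x) = \<beta> (act g x)"
proof -
  have "\<beta> x \<in> {1..d}" "inv_into (nbhd E \<alpha>) \<beta> (\<beta> x) = x"
    using assms numbering bij_betwE bij_betw_inv_into_left by fastforce+
  then show ?thesis
    unfolding local_perm_def by simp
qed

lemma local_perm_cases:
  assumes "i \<in> {1..d}"
  obtains x where "x \<in> nbhd E \<alpha>" "i = \<beta> x"
  using assms numbering by (metis bij_betw_imp_surj_on imageE)

lemma local_perm_outside: "i \<notin> {1..d} \<Longrightarrow> local_perm g i = i"
  unfolding local_perm_def by (simp only: if_False)

lemma local_perm_mult:
  assumes "g \<in> stabilizer G act \<alpha>" "h \<in> stabilizer G act \<alpha>"
  shows "local_perm (g \<otimes> h) = local_perm g \<circ> local_perm h"
proof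
  fix i show "local_perm (g \<otimes> h) i = (local_perm g \<circ> local_perm h) i"
  proof (cases "i \<in> {1..d}")
    case True
    then obtain x where x: "x \<in> nbhd E \<alpha>" "i = \<beta> x"
      by (rule local_perm_cases)
    have "act (g \<otimes> h) x = act g (act h x)"
      using composition_rule assms x nbhd_subset unfolding stabilizer_def by blast
    then show ?thesis
      using x act_stabilizer_nbhd[OF assms(2) x(1)] by (simp add: local_perm_numbering)
  qed (simp add: local_perm_outside)
qed

lemma local_perm_one: "local_perm \<one> = id"
proof
  fix i show "local_perm \<one> i = id i"
  proof (cases "i \<in> {1..d}")
    case True
    then obtain x where "x \<in> nbhd E \<alpha>" "i = \<beta> x"
      by (rule local_perm_cases)
    moreover have "x \<in> V"
      using \<open>x \<in> nbhd E \<alpha>\<close> nbhd_subset by blast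
    ultimately show ?thesis
      using act_one by (simp add: local_perm_numbering)
  qed (simp add: local_perm_outside)
qed

lemma local_perm_permutes:
  assumes "g \<in> stabilizer G act \<alpha>"
  shows "local_perm g permutes {1..d}"
proof -
  have ig: "inv g \<in> stabilizer G act \<alpha>"
    using stabilizer_subgroup[OF base_in_V] assms by (rule subgroup.m_inv_closed)
  have gG: "g \<in> carrier G"
    using assms unfolding stabilizer_def by simp
  have "local_perm g \<circ> local_perm (inv g) = id" "local_perm (inv g) \<circ> local_perm g = id"
    using local_perm_mult[OF assms ig] local_perm_mult[OF ig assms] local_perm_one gG by simp_all
  then have "bij (local_perm g)"
    using o_bij by blast
  then show ?thesis
    unfolding permutes_def bij_iff[symmetric] using local_perm_outside by blast
qed

lemma conj_in_base_stabilizer: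
  assumes "g0 \<in> carrier G" "w \<in> V" "act g0 w = \<alpha>" "x \<in> stabilizer G act w"
  shows "g0 \<otimes> x \<otimes> inv g0 \<in> stabilizer G act \<alpha>"
proof -
  have "x \<in> carrier G" "act x w = w"
    using assms(4) unfolding stabilizer_def by auto
  then show ?thesis
    using act_conj[OF assms(1) _ assms(2)] assms(1,3) unfolding stabilizer_def by auto
qed

lemma local_representation:
  assumes g0: "g0 \<in> carrier G" "w \<in> V" "act g0 w = \<alpha>"
    and H: "subgroup H G" "H \<subseteq> stabilizer G act w"
  defines "\<rho> \<equiv> \<lambda>x. local_perm (g0 \<otimes> x \<otimes> inv g0)"
  shows "\<rho> \<in> hom (G\<lparr>carrier := H\<rparr>) (sym_group d)"
    and "\<rho> ` H \<subseteq> local_action G E act \<alpha> \<beta> d"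
    and "\<And>x z. x \<in> H \<Longrightarrow> z \<in> nbhd E w \<Longrightarrow> \<rho> x (\<beta> (act g0 z)) = \<beta> (act g0 (act x z))"
proof -
  have conj: "g0 \<otimes> x \<otimes> inv g0 \<in> stabilizer G act \<alpha>" if "x \<in> H" for x
    using conj_in_base_stabilizer[OF g0] H(2) that by blast
  have XG: "H \<subseteq> carrier G"
    using subgroup.subset[OF H(1)] .
  show "\<rho> \<in> hom (G\<lparr>carrier := H\<rparr>) (sym_group d)"
  proof (rule homI)
    fix x assume "x \<in> carrier (G\<lparr>carrier := H\<rparr>)"
    then show "\<rho> x \<in> carrier (sym_group d)"
      unfolding \<rho>_def sym_group_carrier using local_perm_permutes conj by simp
  next
    fix x y assume "x \<in> carrier (G\<lparr>carrier := H\<rparr>)" "y \<in> carrier (G\<lparr>carrier := H\<rparr>)"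
    then have xy: "x \<in> H" "y \<in> H"
      by simp_all
    then have "g0 \<otimes> (x \<otimes> y) \<otimes> inv g0 = (g0 \<otimes> x \<otimes> inv g0) \<otimes> (g0 \<otimes> y \<otimes> inv g0)"
      using XG g0(1) by (simp add: m_assoc inv_solve_left subsetD)
    then show "\<rho> (x \<otimes>\<^bsub>G\<lparr>carrier := H\<rparr>\<^esub> y) = \<rho> x \<otimes>\<^bsub>sym_group d\<^esub> \<rho> y"
      unfolding \<rho>_def using local_perm_mult[OF conj conj] xy by (simp add: sym_group_mult)
  qed
  show "\<rho> ` H \<subseteq> local_action G E act \<alpha> \<beta> d"
    unfolding \<rho>_def using local_perm_in_local_action conj by blast
  fix x z assume x: "x \<in> H" and z: "z \<in> nbhd E w"
  have "act g0 z \<in> nbhd E \<alpha>"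
    using act_nbhd[OF g0(1,2) z] g0(3) by simp
  moreover have "act (g0 \<otimes> x \<otimes> inv g0) (act g0 z) = act g0 (act x z)"
    using act_conj[OF g0(1)] x XG z nbhd_subset by blast
  ultimately show "\<rho> x (\<beta> (act g0 z)) = \<beta> (act g0 (act x z))"
    unfolding \<rho>_def by (simp add: local_perm_numbering)
qed

lemma local_representation_trivial:
  assumes g0: "g0 \<in> carrier G" "w \<in> V" "act g0 w = \<alpha>"
    and H: "subgroup H G" "H \<subseteq> stabilizer G act w"
    and x: "x \<in> H" "local_perm (g0 \<otimes> x \<otimes> inv g0) = id"
  shows "\<forall>y\<in>nbhd E w. act x y = y"
proof
  fix y assume y: "y \<in> nbhd E w"
  have xG: "x \<in> carrier G" and "act x y \<in> nbhd E w"
    using act_nbhd[of x w y] x(1) H(2) g0(2) y unfolding stabilizer_def by auto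
  moreover have "\<beta> (act g0 (act x y)) = \<beta> (act g0 y)"
    using local_representation(3)[OF g0 H x(1) y] x(2) by simp
  moreover have "act g0 v \<in> nbhd E \<alpha>" if "v \<in> nbhd E w" for v
    using act_nbhd[OF g0(1,2) that] g0(3) by simp
  ultimately have "act g0 (act x y) = act g0 y"
    using y numbering unfolding bij_betw_def inj_on_def by blast
  then show "act x y = y"
    using act_inj[OF g0(1)] act_closed[OF xG] y nbhd_subset by blast
qed

lemma subquotients_of_local_action:
  assumes g0: "g0 \<in> carrier G" "w \<in> V" "act g0 w = \<alpha>" and z: "z \<in> nbhd E w"
    and M: "subgroup M G" "M \<subseteq> stabilizer G act w" "\<forall>x\<in>M. act x z = z"
    and \<phi>: "group_hom (G\<lparr>carrier := M\<rparr>) A \<phi>" "\<phi> ` M = carrier A"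
    and kernel: "\<forall>x\<in>M. (\<forall>y\<in>nbhd E w. act x y = y) \<longrightarrow> \<phi> x = \<one>\<^bsub>A\<^esub>"
  shows "(\<exists>i \<in> {1..d}. \<exists>H N. subgroup H (sym_group d) \<and>
            H \<subseteq> point_stabilizer (local_action G E act \<alpha> \<beta> d) i \<and>
            N \<lhd> (sym_group d)\<lparr>carrier := H\<rparr> \<and> (sym_group d)\<lparr>carrier := H\<rparr> Mod N \<cong> A)
       \<and> (\<exists>H N. subgroup H (sym_group (d - 1)) \<and>
            N \<lhd> (sym_group (d - 1))\<lparr>carrier := H\<rparr> \<and> (sym_group (d - 1))\<lparr>carrier := H\<rparr> Mod N \<cong> A)"
proof -
  define \<rho> where "\<rho> x = local_perm (g0 \<otimes> x \<otimes> inv g0)" for x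
  note rep = local_representation[OF g0 M(1,2), folded \<rho>_def]
  define i where "i = \<beta> (act g0 z)"
  have i: "i \<in> {1..d}"
    unfolding i_def using act_nbhd[OF g0(1,2) z] g0(3) numbering bij_betwE by fastforce
  have fix_i: "\<rho> x i = i" if "x \<in> M" for x
    unfolding i_def using rep(3)[OF that z] M(3) that by simp
  have \<rho>: "group_hom (G\<lparr>carrier := M\<rparr>) (sym_group d) \<rho>"
    using subgroup_imp_group[OF M(1)] sym_group_is_group rep(1)
    unfolding group_hom_def group_hom_axioms_def by blast
  have onto: "\<phi> ` carrier (G\<lparr>carrier := M\<rparr>) = carrier A"
    using \<phi>(2) by simp
  have trivial: "\<phi> x = \<one>\<^bsub>A\<^esub>" if "x \<in> carrier (G\<lparr>carrier := M\<rparr>)" "\<rho> x = id" for x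
    using local_representation_trivial[OF g0 M(1,2) _ that(2)[unfolded \<rho>_def]] kernel that(1) by simp
  have "subgroup (\<rho> ` M) (sym_group d) \<and>
      (\<exists>N. N \<lhd> (sym_group d)\<lparr>carrier := \<rho> ` M\<rparr> \<and> (sym_group d)\<lparr>carrier := \<rho> ` M\<rparr> Mod N \<cong> A)"
    using quotient_of_image_if_kernel_le[OF \<rho> \<phi>(1) onto] trivial by (simp add: sym_group_one)
  moreover have "\<rho> ` M \<subseteq> point_stabilizer (local_action G E act \<alpha> \<beta> d) i"
    using rep(2) fix_i unfolding point_stabilizer_def by blast
  moreover have "\<exists>H N. subgroup H (sym_group (d - 1)) \<and>
      N \<lhd> (sym_group (d - 1))\<lparr>carrier := H\<rparr> \<and> (sym_group (d - 1))\<lparr>carrier := H\<rparr> Mod N \<cong> A"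
    using subquotient_of_smaller_sym_group[OF \<rho> \<phi>(1) onto trivial i] fix_i by simp
  ultimately show ?thesis
    using i by blast
qed

end

lemma local_frame_of_cayley_abels_graph:
  assumes "topological_group G T" "cayley_abels_graph G T V E act"
    and "\<alpha> \<in> V" "bij_betw \<beta> (nbhd E \<alpha>) {1..d}"
  shows "local_frame G V act E \<alpha> \<beta> d"
  using assms
  unfolding local_frame_def local_frame_axioms_def graph_action_def graph_action_axioms_def
    topological_group_def cayley_abels_graph_def
  by blast

theorem theorem5p5:
  fixes G :: "('a, 'b) monoid_scheme" and T :: "'a topology"
    and V :: "'v set" and E :: "'v \<Rightarrow> 'v \<Rightarrow> bool" and act :: "'a \<Rightarrow> 'v \<Rightarrow> 'v"
    and d :: nat and \<alpha> :: 'v and \<beta> :: "'v \<Rightarrow> nat"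
    and A :: "('c, 'e) monoid_scheme"
  assumes "tdlc_group G T"
    and "compactly_generated G T"
    and "cayley_abels_graph G T V E act"
    and "\<forall>v \<in> V. card (nbhd E v) = d"
    and "\<alpha> \<in> V"
    and "bij_betw \<beta> (nbhd E \<alpha>) {1..d}"
    and "in_local_simple_content (G Mod (action_kernel G V act))
           (quot_topology G T (action_kernel G V act)) A"
  shows "(\<exists>i \<in> {1..d}. \<exists>H N. subgroup H (sym_group d) \<and>
            H \<subseteq> point_stabilizer (local_action G E act \<alpha> \<beta> d) i \<and>
            N \<lhd> (sym_group d)\<lparr>carrier := H\<rparr> \<and>
            ((sym_group d)\<lparr>carrier := H\<rparr> Mod N) \<cong> A)
       \<and> (\<exists>H N. subgroup H (sym_group (d - 1)) \<and>
            N \<lhd> (sym_group (d - 1))\<lparr>carrier := H\<rparr> \<and>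
            ((sym_group (d - 1))\<lparr>carrier := H\<rparr> Mod N) \<cong> A)"
proof -
  have tg: "topological_group G T"
    using assms(1) unfolding tdlc_group_def by blast
  note graph = assms(3)[unfolded cayley_abels_graph_def]
  interpret local_frame G V act E \<alpha> \<beta> d
    using local_frame_of_cayley_abels_graph[OF tg assms(3,5,6)] .
  \<comment> \<open>Growing from an edge ensures that the critical vertex w has a neighbour z in the grown set.\<close>
  obtain u where u: "E \<alpha> u \<or> (u = \<alpha> \<and> nbhd E \<alpha> = {})"
    unfolding nbhd_def by blast
  have "u \<in> V"
    using u edge_in_V base_in_V by blast
  then obtain P Q \<phi> F where P: "factor_map G P Q A \<phi>" "P \<subseteq> stabilizer G act \<alpha> \<inter> stabilizer G act u"
    and F: "finite F" "F \<subseteq> V" "fixer act P F \<subseteq> Q"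
    using factor_map_with_finite_support[OF tg _ _ base_in_V _ assms(7)] graph by blast
  moreover have "\<forall>v\<in>V. (\<alpha>, v) \<in> {(x, y). E x y}\<^sup>*" "simple_group A"
    using graph base_in_V assms(7) unfolding in_local_simple_content_def by blast+
  ultimately obtain w z M where w: "w \<in> V" "z \<in> nbhd E w"
    and M: "subgroup M G" "M \<subseteq> stabilizer G act w" "\<forall>x\<in>M. act x z = z"
    and \<phi>: "group_hom (G\<lparr>carrier := M\<rparr>) A \<phi>" "\<phi> ` M = carrier A"
      "\<forall>x\<in>M. (\<forall>y\<in>nbhd E w. act x y = y) \<longrightarrow> \<phi> x = \<one>\<^bsub>A\<^esub>"
    using critical_vertex[OF _ base_in_V u] by metis
  obtain g0 where "g0 \<in> carrier G" "act g0 w = \<alpha>"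
    using graph w(1) base_in_V by blast
  then show ?thesis
    using subquotients_of_local_action[OF _ w(1) _ w(2) M \<phi>] by blast
qed

end
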